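(* If $f\in\mathcal F$ and $g\in\mathcal M_f$, then $fg\in\mathcal F$.
   Context: $\Lambda=[-\pi,\pi]$. For $h\ge0$, the geometric mean is $G(h)=\exp\{\frac1{2\pi}\int_\Lambda\ln h(\lambda)d\lambda\}$ if $\ln h\in L^1(\Lambda)$ and $G(h)=0$ otherwise. For a spectral density $f$ ($f\ge0$, $f\in L^1(\Lambda)$, positive on a set of positive measure), $\sigma_n^2(f)=\min_{c_1,\dots,c_n\in\mathbb C}\int_\Lambda|1-\sum_{k=1}^n c_ke^{-ik\lambda}|^2f(\lambda)\,d\lambda$ and $\sigma_n(f)=\sqrt{\sigma_n^2(f)}$. $\mathcal F=\{f\in L^1(\Lambda): f\ge0,\ G(f)=0,\ \lim_{n\to\infty}\sigma_{n+1}(f)/\sigma_n(f)=1\}$ (spectral densities of deterministic processes with weakly varying prediction error). For $f\in\mathcal F$, $\mathcal M_f$ is the class of functions $g\ge0$ on $\Lambda$ with $G(g)>0$, $fg\in L^1(\Lambda)$ and $\lim_{n\to\infty}\sigma_n^2(fg)/\sigma_n^2(f)=G(g)$. *)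

theory Defs
  imports "HOL-Analysis.Analysis"
begin

definition Lam :: "real set" where
  "Lam = {-pi..pi}"

text \<open>Geometric mean. ln h in L1 requires h > 0 almost everywhere on Lambda
  (otherwise ln h = -infinity on a set of positive measure).\<close>
definition geom_mean :: "(real \<Rightarrow> real) \<Rightarrow> real" where
  "geom_mean h =
    (if (AE x in lebesgue. x \<in> Lam \<longrightarrow> h x > 0) \<and>
        set_integrable lebesgue Lam (\<lambda>x. ln (h x))
     then exp (1 / (2 * pi) * (LINT x:Lam|lebesgue. ln (h x)))
     else 0)"

text \<open>sigma_n^2(f): minimal one-step prediction error from n past values.\<close>
definition sigma_sq :: "(real \<Rightarrow> real) \<Rightarrow> nat \<Rightarrow> real" where
  "sigma_sq f n =
    (INF c \<in> (UNIV :: (nat \<Rightarrow> complex) set).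
       LINT x:Lam|lebesgue.
         (cmod (1 - (\<Sum>k=1..n. c k * cis (- (real k * x))))) ^ 2 * f x)"

definition sigma :: "(real \<Rightarrow> real) \<Rightarrow> nat \<Rightarrow> real" where
  "sigma f n = sqrt (sigma_sq f n)"

definition classF :: "(real \<Rightarrow> real) set" where
  "classF = {f. set_integrable lebesgue Lam f \<and> (\<forall>x\<in>Lam. f x \<ge> 0) \<and>
               geom_mean f = 0 \<and>
               (\<lambda>n. sigma f (Suc n) / sigma f n) \<longlonglongrightarrow> 1}"

definition classM :: "(real \<Rightarrow> real) \<Rightarrow> (real \<Rightarrow> real) set" where
  "classM f = {g. (\<forall>x\<in>Lam. g x \<ge> 0) \<and> geom_mean g > 0 \<and>
                  set_integrable lebesgue Lam (\<lambda>x. f x * g x) \<and>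
                  (\<lambda>n. sigma_sq (\<lambda>x. f x * g x) n / sigma_sq f n)
                     \<longlonglongrightarrow> geom_mean g}"

end

theory Submission
  imports Defs
begin

text \<open>Since \<open>ln (f g) = ln f + ln g\<close> almost everywhere, integrability of \<open>ln (f g)\<close> and of
  \<open>ln g\<close> would force that of \<open>ln f\<close>, so a deterministic density stays deterministic after
  multiplication by a weight of positive geometric mean. Weak variation of the prediction
  error passes from \<open>f\<close> to \<open>f g\<close> because \<open>\<sigma>\<^sub>n\<^sup>2(f g)/\<sigma>\<^sub>n\<^sup>2(f)\<close> has the nonzero limit
  \<open>G(g)\<close>, so the one-step ratios of the two error sequences have the same limit.\<close>

lemma set_integrable_ln_factor:
  fixes f g :: "'a::euclidean_space \<Rightarrow> real"
  assumes f_pos: "AE x in lebesgue. x \<in> A \<longrightarrow> f x > 0"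
    and g_pos: "AE x in lebesgue. x \<in> A \<longrightarrow> g x > 0"
    and ln_fg: "set_integrable lebesgue A (\<lambda>x. ln (f x * g x))"
    and ln_g: "set_integrable lebesgue A (\<lambda>x. ln (g x))"
  shows "set_integrable lebesgue A (\<lambda>x. ln (f x))"
proof -
  have diff: "integrable lebesgue
      (\<lambda>x. indicator A x *\<^sub>R ln (f x * g x) - indicator A x *\<^sub>R ln (g x))"
    using ln_fg ln_g unfolding set_integrable_def by (rule Bochner_Integration.integrable_diff)
  have diff_eq: "AE x in lebesgue. indicator A x *\<^sub>R ln (f x * g x) - indicator A x *\<^sub>R ln (g x)
      = indicator A x *\<^sub>R ln (f x)"
    using f_pos g_pos by eventually_elim (auto simp: indicator_def ln_mult)
  have "(\<lambda>x. indicator A x *\<^sub>R ln (f x)) \<in> borel_measurable lebesgue"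
    by (rule borel_measurable_AE[OF borel_measurable_integrable[OF diff] diff_eq])
  then show ?thesis
    unfolding set_integrable_def by (rule integrable_cong_AE_imp[OF diff _ diff_eq])
qed

lemma geom_mean_mult_eq_0:
  fixes f g :: "real \<Rightarrow> real"
  assumes f_nonneg: "\<forall>x\<in>Lam. f x \<ge> 0" and "geom_mean f = 0" and "geom_mean g > 0"
  shows "geom_mean (\<lambda>x. f x * g x) = 0"
proof (rule ccontr)
  assume "geom_mean (\<lambda>x. f x * g x) \<noteq> 0"
  hence fg_pos: "AE x in lebesgue. x \<in> Lam \<longrightarrow> f x * g x > 0"
    and ln_fg: "set_integrable lebesgue Lam (\<lambda>x. ln (f x * g x))"
    unfolding geom_mean_def by (auto split: if_splits)
  from \<open>geom_mean g > 0\<close> have g_pos: "AE x in lebesgue. x \<in> Lam \<longrightarrow> g x > 0"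
    and ln_g: "set_integrable lebesgue Lam (\<lambda>x. ln (g x))"
    unfolding geom_mean_def by (auto split: if_splits)
  have f_pos: "AE x in lebesgue. x \<in> Lam \<longrightarrow> f x > 0"
    using fg_pos g_pos f_nonneg by eventually_elim (auto simp: zero_less_mult_iff)
  with set_integrable_ln_factor[OF f_pos g_pos ln_fg ln_g] have "geom_mean f > 0"
    unfolding geom_mean_def by auto
  with \<open>geom_mean f = 0\<close> show False by simp
qed

lemma tendsto_sqrt_one_iff: "((\<lambda>n. sqrt (r n)) \<longlongrightarrow> 1) F \<longleftrightarrow> (r \<longlongrightarrow> 1) F"
proof
  assume "((\<lambda>n. sqrt (r n)) \<longlongrightarrow> 1) F"
  hence "((\<lambda>n. sqrt (r n) * \<bar>sqrt (r n)\<bar>) \<longlongrightarrow> 1 * \<bar>1\<bar>) F"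
    by (intro tendsto_intros)
  moreover have "sqrt x * \<bar>sqrt x\<bar> = x" for x
    by (cases "x \<ge> 0") (auto simp: real_sqrt_minus[of "- x", simplified])
  ultimately show "(r \<longlongrightarrow> 1) F" by simp
qed (metis real_sqrt_one tendsto_real_sqrt)

lemma sigma_ratio_tendsto_one_iff:
  "(\<lambda>n. sigma f (Suc n) / sigma f n) \<longlonglongrightarrow> 1 \<longleftrightarrow>
   (\<lambda>n. sigma_sq f (Suc n) / sigma_sq f n) \<longlonglongrightarrow> 1"
  unfolding sigma_def real_sqrt_divide[symmetric] by (rule tendsto_sqrt_one_iff)

text \<open>Dividing by \<open>a n / b n\<close> is legitimate only eventually, once it is close to \<open>L \<noteq> 0\<close>.\<close>
lemma ratio_tendsto_one_transfer:
  fixes a b :: "nat \<Rightarrow> 'a :: real_normed_field"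
  assumes quot: "(\<lambda>n. a n / b n) \<longlonglongrightarrow> L" and "L \<noteq> 0"
    and b_ratio: "(\<lambda>n. b (Suc n) / b n) \<longlonglongrightarrow> 1"
  shows "(\<lambda>n. a (Suc n) / a n) \<longlonglongrightarrow> 1"
proof -
  have "(\<lambda>n. (a (Suc n) / b (Suc n)) / (a n / b n) * (b (Suc n) / b n)) \<longlonglongrightarrow> L / L * 1"
    using quot b_ratio \<open>L \<noteq> 0\<close> by (intro tendsto_intros LIMSEQ_Suc) auto
  hence "(\<lambda>n. (a (Suc n) / b (Suc n)) / (a n / b n) * (b (Suc n) / b n)) \<longlonglongrightarrow> 1"
    using \<open>L \<noteq> 0\<close> by simp
  moreover have "eventually (\<lambda>n. a n \<noteq> 0 \<and> b n \<noteq> 0 \<and> b (Suc n) \<noteq> 0) sequentially"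
    using tendsto_imp_eventually_ne[OF quot \<open>L \<noteq> 0\<close>]
    by (simp add: eventually_sequentially) (metis le_Suc_eq)
  hence "eventually (\<lambda>n. (a (Suc n) / b (Suc n)) / (a n / b n) * (b (Suc n) / b n)
      = a (Suc n) / a n) sequentially"
    by eventually_elim (simp add: field_simps)
  ultimately show ?thesis
    by (rule Lim_transform_eventually)
qed

theorem mainTheorem8:
  fixes f g :: "real \<Rightarrow> real"
  assumes "f \<in> classF" and "g \<in> classM f"
  shows "(\<lambda>x. f x * g x) \<in> classF"
proof -
  from assms have f_nonneg: "\<forall>x\<in>Lam. f x \<ge> 0" and "geom_mean f = 0"
    and f_ratio: "(\<lambda>n. sigma f (Suc n) / sigma f n) \<longlonglongrightarrow> 1"
    and g_nonneg: "\<forall>x\<in>Lam. g x \<ge> 0" and "geom_mean g > 0"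
    and "set_integrable lebesgue Lam (\<lambda>x. f x * g x)"
    and quot: "(\<lambda>n. sigma_sq (\<lambda>x. f x * g x) n / sigma_sq f n) \<longlonglongrightarrow> geom_mean g"
    unfolding classF_def classM_def by auto
  have "(\<lambda>n. sigma_sq f (Suc n) / sigma_sq f n) \<longlonglongrightarrow> 1"
    using f_ratio by (simp only: sigma_ratio_tendsto_one_iff)
  with \<open>geom_mean g > 0\<close>
  have "(\<lambda>n. sigma_sq (\<lambda>x. f x * g x) (Suc n) / sigma_sq (\<lambda>x. f x * g x) n) \<longlonglongrightarrow> 1"
    by (intro ratio_tendsto_one_transfer[OF quot]) simp_all
  hence "(\<lambda>n. sigma (\<lambda>x. f x * g x) (Suc n) / sigma (\<lambda>x. f x * g x) n) \<longlonglongrightarrow> 1"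
    by (simp only: sigma_ratio_tendsto_one_iff)
  with f_nonneg g_nonneg \<open>set_integrable lebesgue Lam (\<lambda>x. f x * g x)\<close>
    geom_mean_mult_eq_0[OF f_nonneg \<open>geom_mean f = 0\<close> \<open>geom_mean g > 0\<close>]
  show ?thesis
    unfolding classF_def by auto
qed

end
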